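(* Let $\Gamma$ be a finite undirected graph with girth $g(\Gamma)\ge 5$. Then $G_{aut}^+(\Gamma)=G_{aut}^*(\Gamma)$; that is, the generators of $C(G_{aut}^+(\Gamma))$ satisfy $u_{ij}u_{kl}=u_{kl}u_{ij}$ for all $i,j,k,l$ with $(i,k)\in E$ and $(j,l)\in E$.
   Context: $\Gamma=(V,E)$ is a finite simple undirected graph, $V=\{1,\dots,n\}$. The girth is the length of a shortest cycle in $\Gamma$. $C(G_{aut}^+(\Gamma))$ is the universal unital $C^*$-algebra generated by $u_{ij}$, $1\le i,j\le n$, with relations: (R1) $u_{ij}=u_{ij}^*=u_{ij}^2$; (R2) $\sum_{l} u_{il}=1=\sum_{l} u_{li}$ for all $i$; (R3) $u_{ij}u_{kl}=u_{kl}u_{ij}=0$ whenever exactly one of $(i,k)\in E$, $(j,l)\in E$ holds. $C(G_{aut}^*(\Gamma))$ is the quotient by the additional relations (R4) $u_{ij}u_{kl}=u_{kl}u_{ij}$ for all $(i,k)\in E$, $(j,l)\in E$; "$G_{aut}^+(\Gamma)=G_{aut}^*(\Gamma)$" means (R4) already holds in $C(G_{aut}^+(\Gamma))$. *)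

theory Defs
  imports Complex_Main "HOL-Library.Extended_Nat"
begin

text \<open>The library has no complex vector spaces,
so a unital complex C*-algebra is rendered as a real unital Banach algebra
together with a central element ci (the scalar i times the unit) with ci*ci = -1,
so that complex scalar multiplication (a + b i) x is scaleR a x + scaleR b (ci * x);
plus a conjugate-linear anti-multiplicative involution adj satisfying the C*-identity.\<close>

class cstar_algebra = real_normed_algebra_1 + banach +
  fixes adj :: "'a \<Rightarrow> 'a"
    and ci :: 'a
  assumes ci_sq: "ci * ci = - 1"
    and ci_central: "ci * x = x * ci"
    and norm_complex_scale:
      "norm (scaleR a x + scaleR b (ci * x)) = sqrt (a\<^sup>2 + b\<^sup>2) * norm x"
    and adj_adj: "adj (adj x) = x"
    and adj_add: "adj (x + y) = adj x + adj y"
    and adj_scaleR: "adj (scaleR r x) = scaleR r (adj x)"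
    and adj_ci: "adj ci = - ci"
    and adj_mult: "adj (x * y) = adj y * adj x"
    and cstar_identity: "norm (adj x * x) = (norm x)\<^sup>2"

definition simple_graph :: "nat \<Rightarrow> (nat \<Rightarrow> nat \<Rightarrow> bool) \<Rightarrow> bool" where
  "simple_graph n E \<longleftrightarrow>
     (\<forall>i j. E i j \<longrightarrow> i \<in> {1..n} \<and> j \<in> {1..n}) \<and>
     (\<forall>i j. E i j \<longrightarrow> E j i) \<and> (\<forall>i. \<not> E i i)"

definition is_cycle :: "(nat \<Rightarrow> nat \<Rightarrow> bool) \<Rightarrow> nat list \<Rightarrow> bool" where
  "is_cycle E vs \<longleftrightarrow> length vs \<ge> 3 \<and> distinct vs \<and>
     (\<forall>m < length vs. E (vs ! m) (vs ! ((m + 1) mod length vs)))"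

text \<open>Girth: length of a shortest cycle (infinity if acyclic).\<close>
definition girth :: "(nat \<Rightarrow> nat \<Rightarrow> bool) \<Rightarrow> enat" where
  "girth E = (INF vs \<in> {vs. is_cycle E vs}. enat (length vs))"

end

theory Submission
  imports Defs
begin

text \<open>Girth at least 5 means that two distinct vertices have at most one common neighbour.
Hence, after inserting a row or column sum of u into a product, the relations (R3) kill all
but one term. If i has at least two neighbours this gives
u i j * u k l = u i j * u k l * u i j for i ~ k and j ~ l, and taking adjoints yields
commutation. If i has a single neighbour, counting the products u i j * u k l with i ~ k,
j ~ l in two ways gives deg i * u i j = deg j * u i j, so u i j = 0 unless j also has a
single neighbour l, and then u i j = u i j * u k l = u k l * u i j.\<close>

definition neighbours :: "('v \<Rightarrow> 'v \<Rightarrow> bool) \<Rightarrow> 'v \<Rightarrow> 'v set" where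
  "neighbours E v = {w. E v w}"

definition square_free :: "('v \<Rightarrow> 'v \<Rightarrow> bool) \<Rightarrow> bool" where
  "square_free E \<longleftrightarrow> (\<forall>a b c d. E a b \<and> E b c \<and> E c d \<and> E d a \<longrightarrow> a = c \<or> b = d)"

lemma girth_le_cycle_length: "is_cycle E vs \<Longrightarrow> girth E \<le> enat (length vs)"
  unfolding girth_def by (rule INF_lower) simp

lemma square_free_if_girth_ge_5:
  assumes irrefl: "\<And>v. \<not> E v v" and girth: "girth E \<ge> 5"
  shows "square_free E"
  unfolding square_free_def
proof (intro allI impI; rule ccontr)
  fix a b c d
  assume edges: "E a b \<and> E b c \<and> E c d \<and> E d a" and "\<not> (a = c \<or> b = d)"
  with irrefl have "distinct [a, b, c, d]" by auto
  moreover have "E ([a, b, c, d] ! m) ([a, b, c, d] ! ((m + 1) mod 4))" if "m < 4" for m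
  proof -
    from that have "m = 0 \<or> m = 1 \<or> m = 2 \<or> m = 3" by auto
    then show ?thesis using edges by auto
  qed
  ultimately have "is_cycle E [a, b, c, d]" unfolding is_cycle_def by simp
  then have "girth E \<le> enat (length [a, b, c, d])"
    by (rule girth_le_cycle_length)
  then have "girth E \<le> 4"
    by (simp add: numeral_eq_enat eval_nat_numeral)
  with girth have "(5::enat) \<le> 4" by (rule order_trans)
  then show False by (simp add: numeral_eq_enat)
qed

lemma selfadjoint_mult_commute:
  fixes a b :: "'a::cstar_algebra"
  assumes "adj a = a" "adj b = b" and absorb: "a * b = a * b * a"
  shows "a * b = b * a"
proof -
  have "b * a = adj (a * b)" using assms by (simp add: adj_mult)
  also have "\<dots> = adj (a * b * a)" using absorb by simp
  also have "\<dots> = adj a * adj b * adj a" by (simp add: adj_mult mult.assoc)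
  also have "\<dots> = a * b * a" using assms by simp
  finally show ?thesis using absorb by simp
qed

text \<open>Only (R2) and (R3) are assumed, over an arbitrary real algebra. The second product
in (R3) is omitted: it is the first one with the pairs (i, j) and (k, l) exchanged.\<close>

locale graph_magic_unitary =
  fixes n :: nat and E :: "nat \<Rightarrow> nat \<Rightarrow> bool"
    and u :: "nat \<Rightarrow> nat \<Rightarrow> 'a::real_algebra_1"
  assumes graph: "simple_graph n E"
    and row_sum: "i \<in> {1..n} \<Longrightarrow> (\<Sum>l\<in>{1..n}. u i l) = 1"
    and col_sum: "l \<in> {1..n} \<Longrightarrow> (\<Sum>i\<in>{1..n}. u i l) = 1"
    and mult_eq_0: "\<lbrakk>i \<in> {1..n}; j \<in> {1..n}; k \<in> {1..n}; l \<in> {1..n}; E i k \<noteq> E j l\<rbrakk>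
                    \<Longrightarrow> u i j * u k l = 0"
begin

lemma edge_in_vertices: "E i k \<Longrightarrow> i \<in> {1..n} \<and> k \<in> {1..n}"
  using graph unfolding simple_graph_def by blast

lemma edge_sym: "E i k \<Longrightarrow> E k i"
  using graph unfolding simple_graph_def by blast

lemma neighbours_subset: "neighbours E v \<subseteq> {1..n}"
  unfolding neighbours_def using edge_in_vertices by blast

lemma finite_neighbours: "finite (neighbours E v)"
  using neighbours_subset finite_subset by blast

lemma u_eq_sum_mult_row:
  assumes "E i k" "j \<in> {1..n}"
  shows "u i j = (\<Sum>l\<in>neighbours E j. u i j * u k l)"
proof -
  have "u i j = (\<Sum>l\<in>{1..n}. u i j * u k l)"
    using row_sum edge_in_vertices assms by (simp flip: sum_distrib_left)
  also have "\<dots> = (\<Sum>l\<in>neighbours E j. u i j * u k l)"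
    using assms edge_in_vertices neighbours_subset
    by (intro sum.mono_neutral_right) (auto simp: neighbours_def intro!: mult_eq_0)
  finally show ?thesis .
qed

lemma u_eq_sum_row_mult:
  assumes "E i k" "j \<in> {1..n}"
  shows "u i j = (\<Sum>l\<in>neighbours E j. u k l * u i j)"
proof -
  have "u i j = (\<Sum>l\<in>{1..n}. u k l * u i j)"
    using row_sum edge_in_vertices assms by (simp flip: sum_distrib_right)
  also have "\<dots> = (\<Sum>l\<in>neighbours E j. u k l * u i j)"
    using assms edge_in_vertices neighbours_subset
    by (intro sum.mono_neutral_right) (auto simp: neighbours_def edge_sym intro!: mult_eq_0)
  finally show ?thesis .
qed

lemma u_eq_sum_mult_col:
  assumes "E j l" "i \<in> {1..n}"
  shows "u i j = (\<Sum>k\<in>neighbours E i. u i j * u k l)"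
proof -
  have "u i j = (\<Sum>k\<in>{1..n}. u i j * u k l)"
    using col_sum edge_in_vertices assms by (simp flip: sum_distrib_left)
  also have "\<dots> = (\<Sum>k\<in>neighbours E i. u i j * u k l)"
    using assms edge_in_vertices neighbours_subset
    by (intro sum.mono_neutral_right) (auto simp: neighbours_def intro!: mult_eq_0)
  finally show ?thesis .
qed

lemma degree_scaleR_u_eq:
  assumes "i \<in> {1..n}" "j \<in> {1..n}"
  shows "real (card (neighbours E i)) *\<^sub>R u i j = real (card (neighbours E j)) *\<^sub>R u i j"
proof -
  have "real (card (neighbours E i)) *\<^sub>R u i j = (\<Sum>k\<in>neighbours E i. u i j)"
    by (simp add: scaleR_conv_of_real)
  also have "\<dots> = (\<Sum>k\<in>neighbours E i. \<Sum>l\<in>neighbours E j. u i j * u k l)"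
    using assms by (intro sum.cong refl u_eq_sum_mult_row) (auto simp: neighbours_def)
  also have "\<dots> = (\<Sum>l\<in>neighbours E j. \<Sum>k\<in>neighbours E i. u i j * u k l)"
    by (rule sum.swap)
  also have "\<dots> = (\<Sum>l\<in>neighbours E j. u i j)"
    using assms by (intro sum.cong refl u_eq_sum_mult_col [symmetric]) (auto simp: neighbours_def)
  also have "\<dots> = real (card (neighbours E j)) *\<^sub>R u i j"
    by (simp add: scaleR_conv_of_real)
  finally show ?thesis .
qed

lemma u_commute_if_degree_1:
  assumes deg: "card (neighbours E i) = 1" and "E i k" "E j l"
  shows "u i j * u k l = u k l * u i j"
proof (cases "card (neighbours E j) = 1")
  case True
  moreover have "l \<in> neighbours E j" using \<open>E j l\<close> by (simp add: neighbours_def)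
  ultimately have "neighbours E j = {l}" by (metis card_1_singletonE singletonD)
  then show ?thesis
    using u_eq_sum_mult_row [of i k j] u_eq_sum_row_mult [of i k j] assms edge_in_vertices
    by simp
next
  case False
  have "(real (card (neighbours E j)) - 1) *\<^sub>R u i j = 0"
    using degree_scaleR_u_eq [of i j] deg assms edge_in_vertices
    by (simp add: scaleR_left_diff_distrib)
  with False show ?thesis by simp
qed

end

locale square_free_graph_magic_unitary = graph_magic_unitary +
  assumes square_free: "square_free E"
begin

lemma common_neighbour_unique:
  "\<lbrakk>E j l; E p l; E j l'; E p l'; j \<noteq> p\<rbrakk> \<Longrightarrow> l = l'"
  using square_free edge_sym unfolding square_free_def by blast

lemma u_mult_u_eq_insert_common_neighbour:
  assumes "E i a" "E j l" "E p l" "j \<noteq> p"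
  shows "u i j * u i p = u i j * u a l * u i p"
proof -
  have i: "i \<in> {1..n}" and a: "a \<in> {1..n}" and j: "j \<in> {1..n}" and p: "p \<in> {1..n}"
    and l: "l \<in> {1..n}"
    using assms edge_in_vertices by blast+
  have "u i j * u i p = u i j * (\<Sum>l'\<in>{1..n}. u a l') * u i p"
    using row_sum [OF a] by simp
  also have "\<dots> = (\<Sum>l'\<in>{1..n}. u i j * u a l' * u i p)"
    by (simp add: sum_distrib_left sum_distrib_right)
  also have "\<dots> = (\<Sum>l'\<in>{l}. u i j * u a l' * u i p)"
  proof (rule sum.mono_neutral_right)
    show "\<forall>l'\<in>{1..n} - {l}. u i j * u a l' * u i p = 0"
    proof
      fix l' assume l': "l' \<in> {1..n} - {l}"
      then consider "\<not> E j l'" | "\<not> E p l'"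
        using common_neighbour_unique [of j l p l'] assms by blast
      then show "u i j * u a l' * u i p = 0"
      proof cases
        case 1
        then have "u i j * u a l' = 0" using mult_eq_0 [of i j a l'] i j a l' assms(1) by simp
        then show ?thesis by simp
      next
        case 2
        then have "\<not> E l' p" using edge_sym by blast
        then have "u a l' * u i p = 0"
          using mult_eq_0 [of a l' i p] a l' i p edge_sym [OF assms(1)] by simp
        then show ?thesis by (simp add: mult.assoc)
      qed
    qed
  qed (use l in simp_all)
  finally show ?thesis by simp
qed

text \<open>In a C*-algebra u i j * u i p = 0 holds for all j \<noteq> p by positivity; the purely
algebraic argument here needs a second neighbour of i.\<close>

lemma u_mult_u_row_eq_0:
  assumes deg: "2 \<le> card (neighbours E i)" and "i \<in> {1..n}" "E j l" "E p l" "j \<noteq> p"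
  shows "u i j * u i p = 0"
proof -
  have "u i j * u i p = (\<Sum>a\<in>neighbours E i. u i j * u a l) * u i p"
    using u_eq_sum_mult_col assms by simp
  also have "\<dots> = (\<Sum>a\<in>neighbours E i. u i j * u a l * u i p)"
    by (simp add: sum_distrib_right)
  also have "\<dots> = (\<Sum>a\<in>neighbours E i. u i j * u i p)"
  proof (rule sum.cong [OF refl])
    fix a assume "a \<in> neighbours E i"
    then have "E i a" by (simp add: neighbours_def)
    then show "u i j * u a l * u i p = u i j * u i p"
      using u_mult_u_eq_insert_common_neighbour assms by simp
  qed
  also have "\<dots> = real (card (neighbours E i)) *\<^sub>R (u i j * u i p)"
    by (simp add: scaleR_conv_of_real)
  finally have "(real (card (neighbours E i)) - 1) *\<^sub>R (u i j * u i p) = 0"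
    by (simp add: scaleR_left_diff_distrib)
  with deg show ?thesis by simp
qed

lemma u_mult_u_absorb:
  assumes deg: "2 \<le> card (neighbours E i)" and ik: "E i k" and jl: "E j l"
  shows "u i j * u k l = u i j * u k l * u i j"
proof -
  have i: "i \<in> {1..n}" and k: "k \<in> {1..n}" and j: "j \<in> {1..n}" and l: "l \<in> {1..n}"
    using assms edge_in_vertices by blast+
  have "u i j * u k l = u i j * u k l * (\<Sum>p\<in>{1..n}. u i p)"
    using row_sum [OF i] by simp
  also have "\<dots> = (\<Sum>p\<in>{1..n}. u i j * u k l * u i p)"
    by (simp add: sum_distrib_left)
  also have "\<dots> = (\<Sum>p\<in>{j}. u i j * u k l * u i p)"
  proof (rule sum.mono_neutral_right)
    show "\<forall>p\<in>{1..n} - {j}. u i j * u k l * u i p = 0"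
    proof
      fix p assume p: "p \<in> {1..n} - {j}"
      show "u i j * u k l * u i p = 0"
      proof (cases "E p l")
        case True
        then have "u i j * u k l * u i p = u i j * u i p"
          using u_mult_u_eq_insert_common_neighbour [OF ik jl True] p by simp
        also have "\<dots> = 0"
          using u_mult_u_row_eq_0 [OF deg i jl True] p by simp
        finally show ?thesis .
      next
        case False
        then have "\<not> E l p" using edge_sym by blast
        then have "u k l * u i p = 0"
          using mult_eq_0 [of k l i p] k l i p edge_sym [OF ik] by simp
        then show ?thesis by (simp add: mult.assoc)
      qed
    qed
  qed (use j in simp_all)
  finally show ?thesis by simp
qed

end

lemma square_free_graph_magic_unitary_if_girth_ge_5:
  fixes u :: "nat \<Rightarrow> nat \<Rightarrow> 'a::real_algebra_1"
  assumes graph: "simple_graph n E" and girth: "girth E \<ge> 5"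
    and sums: "\<forall>i\<in>{1..n}. (\<Sum>l\<in>{1..n}. u i l) = 1 \<and> (\<Sum>l\<in>{1..n}. u l i) = 1"
    and orth: "\<forall>i\<in>{1..n}. \<forall>j\<in>{1..n}. \<forall>k\<in>{1..n}. \<forall>l\<in>{1..n}.
               E i k \<noteq> E j l \<longrightarrow> u i j * u k l = 0 \<and> u k l * u i j = 0"
  shows "square_free_graph_magic_unitary n E u"
proof
  show "simple_graph n E" by (fact graph)
  show "(\<Sum>l\<in>{1..n}. u i l) = 1" if "i \<in> {1..n}" for i using sums that by blast
  show "(\<Sum>i\<in>{1..n}. u i l) = 1" if "l \<in> {1..n}" for l using sums that by blast
  show "u i j * u k l = 0"
    if "i \<in> {1..n}" "j \<in> {1..n}" "k \<in> {1..n}" "l \<in> {1..n}" "E i k \<noteq> E j l" for i j k l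
    using orth that by blast
  show "square_free E"
    using graph girth by (intro square_free_if_girth_ge_5) (auto simp: simple_graph_def)
qed

theorem theorem3p4:
  fixes n :: nat and E :: "nat \<Rightarrow> nat \<Rightarrow> bool"
    and u :: "nat \<Rightarrow> nat \<Rightarrow> 'a::cstar_algebra"
  assumes graph: "simple_graph n E"
    and girth5: "girth E \<ge> 5"
    and R1: "\<forall>i\<in>{1..n}. \<forall>j\<in>{1..n}. adj (u i j) = u i j \<and> u i j * u i j = u i j"
    and R2: "\<forall>i\<in>{1..n}. (\<Sum>l\<in>{1..n}. u i l) = 1 \<and> (\<Sum>l\<in>{1..n}. u l i) = 1"
    and R3: "\<forall>i\<in>{1..n}. \<forall>j\<in>{1..n}. \<forall>k\<in>{1..n}. \<forall>l\<in>{1..n}.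
               E i k \<noteq> E j l \<longrightarrow> u i j * u k l = 0 \<and> u k l * u i j = 0"
  shows "\<forall>i\<in>{1..n}. \<forall>j\<in>{1..n}. \<forall>k\<in>{1..n}. \<forall>l\<in>{1..n}.
           E i k \<and> E j l \<longrightarrow> u i j * u k l = u k l * u i j"
proof (intro ballI impI, elim conjE)
  fix i j k l
  assume vertices: "i \<in> {1..n}" "j \<in> {1..n}" "k \<in> {1..n}" "l \<in> {1..n}"
    and "E i k" "E j l"
  interpret square_free_graph_magic_unitary n E u
    using square_free_graph_magic_unitary_if_girth_ge_5 [OF graph girth5 R2 R3] .
  have "card (neighbours E i) \<noteq> 0"
    using \<open>E i k\<close> finite_neighbours by (auto simp: neighbours_def)
  then consider "card (neighbours E i) = 1" | "2 \<le> card (neighbours E i)"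
    by (cases "card (neighbours E i) = 1") auto
  then show "u i j * u k l = u k l * u i j"
  proof cases
    case 1
    then show ?thesis using u_commute_if_degree_1 \<open>E i k\<close> \<open>E j l\<close> by simp
  next
    case 2
    show ?thesis
      using u_mult_u_absorb [OF 2 \<open>E i k\<close> \<open>E j l\<close>] R1 vertices
      by (intro selfadjoint_mult_commute) auto
  qed
qed

end
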